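(* Let $i\ge1$, let $u$ be any word of length $n$ of type $(m_1,\dots,m_{i-1})$, and let $m_i$ be a positive integer with $c:=m_1+\dots+m_i\le n$. Then the sum, over all queues $q$ of capacity $c$ (i.e. over all $c$-element subsets of terminal sites), of the weight of $q$ with respect to $u$ equals \[ h_{n-c}(\underbrace{t_1,\dots,t_1}_{m_1},\underbrace{t_2,\dots,t_2}_{m_2},\dots,\underbrace{t_{i-1},\dots,t_{i-1}}_{m_{i-1}},\underbrace{t_i,\dots,t_i}_{m_i+1}), \] where $h_k$ denotes the complete homogeneous symmetric polynomial of degree $k$.
   Context: Fix a positive integer $n$; sites $1,\dots,n$ are arranged cyclically. A word is $w=w_1\cdots w_n\in\{1,2,\dots,\infty\}^n$; finite entries are particles (of size equal to the entry), entries $\infty$ are empty sites. A word has type $(m_1,\dots,m_{i-1})$ (positive integers) if it has exactly $m_j$ entries equal to $j$ for $1\le j\le i-1$ and all other entries $\infty$. Queues: a queue of capacity $c$ is a choice of $c$ of the $n$ sites, called terminal. Given the input word $u$ (finite entries in $\{1,\dots,i-1\}$), replace each $\infty$ by $i$; then the $n$ particles enter the queue one at a time in an order in which smaller particles come before larger ones (ties arbitrary). A particle at site $j$ first visits site $j$, then $j+1,j+2,\dots$ cyclically, stopping at (and occupying) the first terminal site not yet occupied; if all terminal sites are occupied it visits every site and is discarded. For each size $s\in\{1,\dots,i\}$ let $\alpha_s$ be the number of non-terminal sites whose first visitor has size $s$; the weight of $q$ with respect to $u$ is $\prod_{s=1}^{i} t_s^{\alpha_s}$ (independent of tie-breaking).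 *)

theory Defs
  imports Main "HOL-Library.Extended_Nat" "HOL-Library.Product_Lexorder"
begin

(* Sites 1..n of the paper are represented as 0..n-1 (cyclic, successor = Suc mod n).
   A word is a list of length n over enat; \<infinity> is an empty site. *)

definition has_type :: "enat list \<Rightarrow> nat list \<Rightarrow> bool" where
  "has_type u ms \<longleftrightarrow>
     (\<forall>x\<in>set u. x = \<infinity> \<or> (\<exists>j\<in>{1..length ms}. x = enat j)) \<and>
     (\<forall>j\<in>{1..length ms}. length (filter (\<lambda>x. x = enat j) u) = ms ! (j - 1))"

definition psize :: "nat \<Rightarrow> enat list \<Rightarrow> nat \<Rightarrow> nat" where
  "psize i u k = (case u ! k of enat a \<Rightarrow> a | \<infinity> \<Rightarrow> i)"

(* a fixed admissible entry order: by size, ties broken by site index *)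
definition entry_order :: "nat \<Rightarrow> enat list \<Rightarrow> nat list" where
  "entry_order i u = sort_key (\<lambda>k. (psize i u k, k)) [0..<length u]"

(* one particle of size s, starting at site j, entering the queue Q on n sites.
   State: (occupied terminal sites, size of first visitor of each site). *)
definition step :: "nat \<Rightarrow> nat set \<Rightarrow> nat \<Rightarrow> nat \<Rightarrow>
     nat set \<times> (nat \<Rightarrow> nat option) \<Rightarrow> nat set \<times> (nat \<Rightarrow> nat option)" where
  "step n Q j s st =
     (let occ = fst st; fv = snd st;
          free = Q - occ;
          d = (if free = {} then n - 1 else (LEAST d. (j + d) mod n \<in> free));
          visited = set (map (\<lambda>d'. (j + d') mod n) [0..<Suc d]);
          occ' = (if free = {} then occ else insert ((j + d) mod n) occ);
          fv' = (\<lambda>x. if x \<in> visited \<and> fv x = None then Some s else fv x)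
      in (occ', fv'))"

definition first_visitor :: "nat \<Rightarrow> nat set \<Rightarrow> enat list \<Rightarrow> nat \<Rightarrow> nat option" where
  "first_visitor i Q u =
     snd (fold (\<lambda>k st. step (length u) Q k (psize i u k) st) (entry_order i u) ({}, (\<lambda>_. None)))"

definition queue_weight :: "nat \<Rightarrow> (nat \<Rightarrow> 'a::comm_ring_1) \<Rightarrow> nat set \<Rightarrow> enat list \<Rightarrow> 'a" where
  "queue_weight i t Q u =
     (\<Prod>s\<in>{1..i}. t s ^ card {x \<in> {0..<length u} - Q. first_visitor i Q u x = Some s})"

definition hcomplete :: "nat \<Rightarrow> 'a::comm_ring_1 list \<Rightarrow> 'a" where
  "hcomplete k xs =
     (\<Sum>e\<in>{e :: nat \<Rightarrow> nat. (\<forall>j\<ge>length xs. e j = 0) \<and> (\<Sum>j<length xs. e j) = k}.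
        \<Prod>j<length xs. xs ! j ^ e j)"

end

theory Submission
  imports Defs
begin

text \<open>A word and a set of terminal sites are encoded as a configuration: a cyclic list of sites,
  each carrying a list of particle sizes, with the terminal sites marked. Because particles enter
  in order of size, conservation of particles along the cycle shows that the first visitor of a
  non-terminal site \<open>x\<close> is the least \<open>s\<close> such that some cyclic arc ending at \<open>x\<close> holds more
  particles of size at most \<open>s\<close> than terminal sites (the level of \<open>x\<close>).

  For weights defined through levels, rotate a smallest particle \<open>s0\<close> to site 0. If site 0 is
  not terminal, its first visitor is \<open>s0\<close> and its particles pass on to site 1; if it is terminal,
  \<open>s0\<close> stops there and the other particles pass on. Either way sites 0 and 1 merge without
  changing any other level, so the sum over the terminal sets satisfies the recursion
  \<open>h\<^sub>k(x, X) = x h\<^sub>k\<^sub>-\<^sub>1(x, X) + h\<^sub>k(X)\<close> with \<open>x = t s0\<close>.\<close>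

section \<open>Complete homogeneous symmetric polynomials\<close>

fun hsym :: "nat \<Rightarrow> 'a::comm_ring_1 list \<Rightarrow> 'a" where
  "hsym k [] = (if k = 0 then 1 else 0)"
| "hsym k (x # xs) = (\<Sum>j\<le>k. x ^ j * hsym (k - j) xs)"

lemma hsym_0 [simp]: "hsym 0 xs = 1"
  by (induction xs) auto

lemma hsym_Cons_rec:
  assumes "0 < k"
  shows "hsym k (x # xs) = x * hsym (k - 1) (x # xs) + hsym k xs"
proof -
  obtain k' where k: "k = Suc k'" using assms by (cases k) auto
  have "hsym k (x # xs) = (\<Sum>j\<le>Suc k'. x ^ j * hsym (Suc k' - j) xs)" using k by simp
  also have "\<dots> = hsym (Suc k') xs + (\<Sum>j\<le>k'. x ^ Suc j * hsym (Suc k' - Suc j) xs)"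
    by (subst sum.atMost_Suc_shift) simp
  also have "(\<Sum>j\<le>k'. x ^ Suc j * hsym (Suc k' - Suc j) xs) = x * hsym k' (x # xs)"
    by (simp add: sum_distrib_left mult.assoc)
  finally show ?thesis using k by (simp add: add.commute)
qed

definition exponents :: "nat \<Rightarrow> nat \<Rightarrow> (nat \<Rightarrow> nat) set" where
  "exponents k m = {e. (\<forall>j\<ge>m. e j = 0) \<and> (\<Sum>j<m. e j) = k}"

definition exp_cons :: "nat \<Rightarrow> (nat \<Rightarrow> nat) \<Rightarrow> nat \<Rightarrow> nat" where
  "exp_cons a e j = (case j of 0 \<Rightarrow> a | Suc j' \<Rightarrow> e j')"

lemma exponents_0: "exponents k 0 = (if k = 0 then {\<lambda>_. 0} else {})"
  by (auto simp: exponents_def)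

lemma exponents_Suc:
  "exponents k (Suc m) = (\<lambda>(a, e). exp_cons a e) ` (SIGMA a:{..k}. exponents (k - a) m)"
proof (rule set_eqI, rule iffI)
  fix e assume e: "e \<in> exponents k (Suc m)"
  have sm: "(\<Sum>j<Suc m. e j) = e 0 + (\<Sum>j<m. e (Suc j))"
    by (rule sum.lessThan_Suc_shift)
  have "e = exp_cons (e 0) (\<lambda>j. e (Suc j))"
    by (rule ext) (simp add: exp_cons_def split: nat.split)
  moreover have "(e 0, \<lambda>j. e (Suc j)) \<in> (SIGMA a:{..k}. exponents (k - a) m)"
    using e sm by (auto simp: exponents_def)
  ultimately show "e \<in> (\<lambda>(a, e). exp_cons a e) ` (SIGMA a:{..k}. exponents (k - a) m)"
    by (auto intro!: image_eqI[where x = "(e 0, \<lambda>j. e (Suc j))"])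
next
  fix e assume "e \<in> (\<lambda>(a, e). exp_cons a e) ` (SIGMA a:{..k}. exponents (k - a) m)"
  then obtain a e' where a: "a \<le> k" and e': "e' \<in> exponents (k - a) m" and e: "e = exp_cons a e'"
    by auto
  have "(\<Sum>j<Suc m. e j) = a + (\<Sum>j<m. e' j)"
    by (simp del: sum.lessThan_Suc add: sum.lessThan_Suc_shift e exp_cons_def)
  then show "e \<in> exponents k (Suc m)" using a e'
    by (auto simp: exponents_def e exp_cons_def split: nat.split)
qed

lemma finite_exponents: "finite (exponents k m)"
  by (induction m arbitrary: k) (simp_all add: exponents_0 exponents_Suc)

lemma inj_exp_cons: "inj (\<lambda>(a, e). exp_cons a e)"
proof (rule injI, clarsimp)
  fix a e b f assume h: "exp_cons a e = exp_cons b f"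
  have "a = b" using fun_cong[OF h, of 0] by (simp add: exp_cons_def)
  moreover have "e = f"
  proof
    fix j show "e j = f j" using fun_cong[OF h, of "Suc j"] by (simp add: exp_cons_def)
  qed
  ultimately show "a = b \<and> e = f" by simp
qed

lemma hcomplete_exponents:
  "hcomplete k xs = (\<Sum>e\<in>exponents k (length xs). \<Prod>j<length xs. xs ! j ^ e j)"
  by (simp add: hcomplete_def exponents_def)

lemma hcomplete_eq_hsym: "hcomplete k xs = hsym k xs"
proof (induction xs arbitrary: k)
  case Nil
  then show ?case by (simp add: hcomplete_exponents exponents_0)
next
  case (Cons x xs)
  let ?m = "length xs"
  have "hcomplete k (x # xs) = (\<Sum>e\<in>exponents k (Suc ?m). \<Prod>j<Suc ?m. (x # xs) ! j ^ e j)"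
    by (simp add: hcomplete_exponents)
  also have "\<dots> = (\<Sum>p\<in>(SIGMA a:{..k}. exponents (k - a) ?m).
                      \<Prod>j<Suc ?m. (x # xs) ! j ^ exp_cons (fst p) (snd p) j)"
    unfolding exponents_Suc
    by (subst sum.reindex) (auto intro: inj_on_subset[OF inj_exp_cons] simp: case_prod_beta)
  also have "\<dots> = (\<Sum>a\<le>k. \<Sum>e\<in>exponents (k - a) ?m. \<Prod>j<Suc ?m. (x # xs) ! j ^ exp_cons a e j)"
    by (simp add: sum.Sigma finite_exponents case_prod_beta)
  also have "\<dots> = (\<Sum>a\<le>k. x ^ a * (\<Sum>e\<in>exponents (k - a) ?m. \<Prod>j<?m. xs ! j ^ e j))"
    by (simp del: prod.lessThan_Suc add: prod.lessThan_Suc_shift exp_cons_def sum_distrib_left)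
  also have "\<dots> = hsym k (x # xs)"
    by (simp add: Cons.IH[symmetric] hcomplete_exponents)
  finally show ?case .
qed

declare hsym.simps(2)[simp del]

section \<open>Configurations and levels\<close>

definition count_le :: "nat \<Rightarrow> nat list \<Rightarrow> nat" where
  "count_le s xs = length (filter (\<lambda>p. p \<le> s) xs)"

definition surplus :: "nat \<Rightarrow> nat list list \<Rightarrow> bool list \<Rightarrow> int list" where
  "surplus s a qs = map (\<lambda>(as, q). int (count_le s as) - of_bool q) (zip a qs)"

definition has_pos_suffix :: "int list \<Rightarrow> bool" where
  "has_pos_suffix xs \<longleftrightarrow> (\<exists>k<length xs. 0 < sum_list (drop k xs))"

text \<open>A configuration \<open>a\<close> places a list of particle sizes on each of \<open>length a\<close> cyclically
  arranged sites, and \<open>qs\<close> marks the terminal sites. Rotating by \<open>Suc y\<close> makes site \<open>y\<close> the last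
  one, so the suffixes of the rotated list are the cyclic arcs ending at \<open>y\<close>: site \<open>y\<close> is
  congested at \<open>s\<close> if such an arc holds more particles of size at most \<open>s\<close> than terminal sites.\<close>

definition congested :: "nat \<Rightarrow> nat list list \<Rightarrow> bool list \<Rightarrow> nat \<Rightarrow> bool" where
  "congested s a qs y \<longleftrightarrow> has_pos_suffix (rotate (Suc y) (surplus s a qs))"

definition level :: "nat \<Rightarrow> nat list list \<Rightarrow> bool list \<Rightarrow> nat \<Rightarrow> nat" where
  "level i a qs y = Min ({s \<in> {1..<i}. congested s a qs y} \<union> {i})"

definition config_weight :: "nat \<Rightarrow> (nat \<Rightarrow> 'a::comm_ring_1) \<Rightarrow> nat list list \<Rightarrow> bool list \<Rightarrow> 'a" where
  "config_weight i t a qs = (\<Prod>y<length qs. if qs ! y then 1 else t (level i a qs y))"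

definition bool_lists :: "nat \<Rightarrow> nat \<Rightarrow> bool list set" where
  "bool_lists N c = {qs. length qs = N \<and> length (filter id qs) = c}"

definition config_sum :: "nat \<Rightarrow> (nat \<Rightarrow> 'a::comm_ring_1) \<Rightarrow> nat list list \<Rightarrow> nat \<Rightarrow> 'a" where
  "config_sum i t a c = (\<Sum>qs\<in>bool_lists (length a) c. config_weight i t a qs)"

definition config_vars :: "nat \<Rightarrow> (nat \<Rightarrow> 'a::comm_ring_1) \<Rightarrow> nat list list \<Rightarrow> nat \<Rightarrow> 'a list" where
  "config_vars i t a c = concat (map (\<lambda>s. replicate (count_list (concat a) s) (t s)) [1..<i])
                           @ replicate (c - length (concat a) + 1) (t i)"

definition sizes_below :: "nat \<Rightarrow> nat list list \<Rightarrow> bool" where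
  "sizes_below i a \<longleftrightarrow> (\<forall>p\<in>set (concat a). 1 \<le> p \<and> p < i)"

lemma finite_bool_lists: "finite (bool_lists N c)"
proof (rule finite_subset)
  show "bool_lists N c \<subseteq> {xs. set xs \<subseteq> UNIV \<and> length xs = N}" by (auto simp: bool_lists_def)
qed (rule finite_lists_length_eq, simp)

lemma bool_lists_Suc:
  "bool_lists (Suc N) c
     = Cons False ` bool_lists N c \<union> (if c = 0 then {} else Cons True ` bool_lists N (c - 1))"
proof (rule set_eqI)
  fix qs show "qs \<in> bool_lists (Suc N) c \<longleftrightarrow>
      qs \<in> Cons False ` bool_lists N c \<union> (if c = 0 then {} else Cons True ` bool_lists N (c - 1))"
    by (cases qs) (auto simp: bool_lists_def)
qed

lemma sum_bool_lists_Suc: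
  "(\<Sum>qs\<in>bool_lists (Suc N) c. g qs) = (\<Sum>qs\<in>bool_lists N c. g (False # qs))
      + (if c = 0 then 0 else (\<Sum>qs\<in>bool_lists N (c - 1). g (True # qs)))"
proof (cases "c = 0")
  case True
  then show ?thesis by (simp add: bool_lists_Suc sum.reindex)
next
  case False
  have "Cons False ` bool_lists N c \<inter> Cons True ` bool_lists N (c - 1) = {}" by auto
  with False show ?thesis
    by (simp add: bool_lists_Suc sum.union_disjoint finite_bool_lists sum.reindex)
qed

lemma bool_lists_full: "bool_lists N N = {replicate N True}"
proof (rule set_eqI)
  fix qs
  show "qs \<in> bool_lists N N \<longleftrightarrow> qs \<in> {replicate N True}"
  proof
    assume "qs \<in> bool_lists N N"
    then have "length (filter id qs) = length qs" "length qs = N" by (auto simp: bool_lists_def)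
    then have "\<forall>x\<in>set qs. x" using length_filter_less[of _ qs id] by fastforce
    then show "qs \<in> {replicate N True}" using \<open>length qs = N\<close> by (auto intro: replicate_eqI)
  qed (simp add: bool_lists_def)
qed

lemma sum_uniform_weights_eq_hsym:
  fixes x :: "'a::comm_ring_1"
  shows "c \<le> N \<Longrightarrow> (\<Sum>qs\<in>bool_lists N c. \<Prod>y<N. if qs ! y then 1 else x)
                       = hsym (N - c) (replicate (c + 1) x)"
proof (induction N arbitrary: c)
  case 0
  then have "bool_lists 0 0 = {[]}" by (auto simp: bool_lists_def)
  with 0 show ?case by simp
next
  case (Suc N)
  have P: "(\<Prod>y<Suc N. if (b # qs) ! y then 1 else x)
             = (if b then 1 else x) * (\<Prod>y<N. if qs ! y then 1 else x)" for b qs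
    by (simp del: prod.lessThan_Suc add: prod.lessThan_Suc_shift)
  have S: "(\<Sum>qs\<in>bool_lists (Suc N) c. \<Prod>y<Suc N. if qs ! y then 1 else x) =
     x * (\<Sum>qs\<in>bool_lists N c. \<Prod>y<N. if qs ! y then 1 else x) +
     (if c = 0 then 0 else (\<Sum>qs\<in>bool_lists N (c - 1). \<Prod>y<N. if qs ! y then 1 else x))"
    by (simp only: sum_bool_lists_Suc P) (simp add: sum_distrib_left)
  consider "c = Suc N" | "c = 0" "c \<le> N" | "0 < c" "c \<le> N" using Suc.prems by linarith
  then show ?case
  proof cases
    case 1
    then show ?thesis by (simp add: bool_lists_full del: replicate.simps)
  next
    case 2
    then show ?thesis
      unfolding S using Suc.IH hsym_Cons_rec[of "Suc N" x "[]"] by simp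
  next
    case 3
    then show ?thesis
      unfolding S using Suc.IH[of c] Suc.IH[of "c - 1"] hsym_Cons_rec[of "Suc N - c" x "replicate c x"]
      by (simp add: Suc_diff_le)
  qed
qed

lemma concat_rotate:
  "concat (rotate r a) = concat (drop (r mod length a) a) @ concat (take (r mod length a) a)"
  by (simp add: rotate_drop_take)

lemma count_list_concat_rotate: "count_list (concat (rotate r a)) x = count_list (concat a) x"
  unfolding concat_rotate by (metis append_take_drop_id concat_append count_list_append add.commute)

lemma length_filter_rotate [simp]: "length (filter P (rotate r xs)) = length (filter P xs)"
  by (metis append_take_drop_id filter_append length_append add.commute rotate_drop_take)

lemma length_concat_rotate: "length (concat (rotate r a)) = length (concat a)"
  unfolding concat_rotate by (metis append_take_drop_id concat_append length_append add.commute)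

lemma config_vars_rotate: "config_vars i t (rotate r a) c = config_vars i t a c"
  by (simp add: config_vars_def count_list_concat_rotate length_concat_rotate)

lemma zip_rotate: "length a = length b \<Longrightarrow> zip (rotate r a) (rotate r b) = rotate r (zip a b)"
proof (rule nth_equalityI)
  fix j assume h: "length a = length b" "j < length (zip (rotate r a) (rotate r b))"
  then have "(r + j) mod length b < length b" by (cases b) auto
  with h show "zip (rotate r a) (rotate r b) ! j = rotate r (zip a b) ! j"
    by (simp add: nth_rotate nth_zip)
qed simp

lemma surplus_rotate:
  "length a = length qs \<Longrightarrow> surplus s (rotate r a) (rotate r qs) = rotate r (surplus s a qs)"
  by (simp add: surplus_def zip_rotate rotate_map)

lemma length_surplus [simp]: "length (surplus s a qs) = min (length a) (length qs)"
  by (simp add: surplus_def)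

lemma congested_rotate:
  assumes "length a = length qs" "0 < length qs"
  shows "congested s (rotate r a) (rotate r qs) y = congested s a qs ((y + r) mod length qs)"
proof -
  let ?V = "surplus s a qs"
  have "rotate (Suc y) (rotate r ?V) = rotate (Suc y + r) ?V" by (simp add: rotate_rotate)
  also have "\<dots> = rotate (Suc ((y + r) mod length qs)) ?V"
    by (subst rotate_conv_mod, subst (2) rotate_conv_mod) (simp add: assms(1) mod_Suc_eq)
  finally show ?thesis using assms by (simp add: congested_def surplus_rotate)
qed

lemma level_rotate:
  assumes "length a = length qs" "0 < length qs"
  shows "level i (rotate r a) (rotate r qs) y = level i a qs ((y + r) mod length qs)"
  using congested_rotate[OF assms] by (simp add: level_def)

lemma bij_betw_add_mod:
  fixes n r :: nat
  assumes n: "0 < n"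
  shows "bij_betw (\<lambda>y. (y + r) mod n) {..<n} {..<n}"
proof (rule bij_betw_byWitness[where f' = "\<lambda>z. (z + (n - r mod n)) mod n"])
  have shift: "(y + r + (n - r mod n)) mod n = y" if "y < n" for y
  proof -
    have "y + r + (n - r mod n) = y + n + (r - r mod n)"
      using mod_less_divisor[OF n, of r] mod_less_eq_dividend[of r n] by linarith
    also have "(y + n + (r - r mod n)) mod n = y"
      using that by (simp add: minus_mod_eq_mult_div)
    finally show ?thesis .
  qed
  show "\<forall>y\<in>{..<n}. ((y + r) mod n + (n - r mod n)) mod n = y"
    using shift by (simp only: mod_add_left_eq) simp
  show "\<forall>z\<in>{..<n}. ((z + (n - r mod n)) mod n + r) mod n = z"
  proof
    fix z assume "z \<in> {..<n}"
    then have "(z + r + (n - r mod n)) mod n = z" by (simp only: shift lessThan_iff)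
    then show "((z + (n - r mod n)) mod n + r) mod n = z"
      by (simp only: mod_add_left_eq) (simp add: ac_simps)
  qed
qed (use n in auto)

lemma prod_add_mod:
  fixes n r :: nat
  assumes "0 < n"
  shows "(\<Prod>y<n. g ((y + r) mod n)) = (\<Prod>z<n. g z)"
  using prod.reindex_bij_betw[OF bij_betw_add_mod[OF assms], of g] by simp

lemma config_weight_rotate:
  assumes "length a = length qs"
  shows "config_weight i t (rotate r a) (rotate r qs) = config_weight i t a qs"
proof (cases "length qs = 0")
  case True then show ?thesis by (simp add: config_weight_def)
next
  case False
  then have n: "0 < length qs" by simp
  have "config_weight i t (rotate r a) (rotate r qs)
     = (\<Prod>y<length qs. (\<lambda>z. if qs ! z then 1 else t (level i a qs z)) ((y + r) mod length qs))"
    unfolding config_weight_def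
    by (rule prod.cong) (auto simp: nth_rotate level_rotate[OF assms n] add.commute)
  also have "\<dots> = config_weight i t a qs" unfolding config_weight_def by (rule prod_add_mod[OF n])
  finally show ?thesis .
qed

lemma bij_betw_rotate_bool_lists:
  assumes N: "0 < N"
  shows "bij_betw (rotate r) (bool_lists N c) (bool_lists N c)"
proof (rule bij_betw_byWitness[where f' = "rotate (N - r mod N)"])
  have "(N - r mod N + r) mod N = (N - r mod N + r mod N) mod N" by (simp add: mod_add_right_eq)
  also have "\<dots> = 0" using N by (simp add: less_imp_le)
  finally have "(N - r mod N + r) mod N = 0" "(r + (N - r mod N)) mod N = 0"
    by (simp_all add: add.commute)
  then show "\<forall>qs\<in>bool_lists N c. rotate (N - r mod N) (rotate r qs) = qs"
    "\<forall>qs\<in>bool_lists N c. rotate r (rotate (N - r mod N) qs) = qs"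
    by (auto simp: rotate_rotate bool_lists_def)
qed (auto simp: bool_lists_def)

lemma config_sum_rotate: "config_sum i t (rotate r a) c = config_sum i t a c"
proof (cases "a = []")
  case True then show ?thesis by simp
next
  case False
  let ?N = "length a"
  have "config_sum i t (rotate r a) c = (\<Sum>qs\<in>bool_lists ?N c. config_weight i t (rotate r a) qs)"
    by (simp add: config_sum_def)
  also have "\<dots> = (\<Sum>qs\<in>bool_lists ?N c. config_weight i t (rotate r a) (rotate r qs))"
    using sum.reindex_bij_betw[OF bij_betw_rotate_bool_lists[of ?N r c], of "config_weight i t (rotate r a)"]
      False by simp
  also have "\<dots> = (\<Sum>qs\<in>bool_lists ?N c. config_weight i t a qs)"
    by (rule sum.cong) (auto simp: bool_lists_def config_weight_rotate)
  finally show ?thesis by (simp add: config_sum_def)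
qed

lemma sum_list_drop: "sum_list (drop k xs) = (\<Sum>l\<in>{k..<length xs}. xs ! l)"
proof (cases "k \<le> length xs")
  case True
  have "sum_list (drop k xs) = (\<Sum>l = 0..<length xs - k. xs ! (l + k))"
    by (simp add: sum_list_sum_nth add.commute)
  also have "\<dots> = (\<Sum>l\<in>{k..<length xs}. xs ! l)"
    using sum.shift_bounds_nat_ivl[of "\<lambda>l. xs ! l" 0 k "length xs - k"] True by simp
  finally show ?thesis .
qed simp

lemma has_pos_suffix_rotate_iff:
  "has_pos_suffix (rotate (Suc x) V)
     \<longleftrightarrow> (\<exists>k<length V. 0 < (\<Sum>l\<in>{k..<length V}. V ! ((x + 1 + l) mod length V)))"
proof -
  have "sum_list (drop k (rotate (Suc x) V)) = (\<Sum>l\<in>{k..<length V}. V ! ((x + 1 + l) mod length V))" for k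
    unfolding sum_list_drop length_rotate
    by (rule sum.cong) (simp_all add: nth_rotate del: rotate_Suc)
  then show ?thesis unfolding has_pos_suffix_def by simp
qed

lemma level_ge_1: "1 \<le> i \<Longrightarrow> 1 \<le> level i a qs y"
  unfolding level_def by (auto intro: Min_le)

lemma level_le: "level i a qs y \<le> i"
  unfolding level_def by (rule Min_le) auto

lemma not_congested_below_level:
  assumes "1 \<le> s" "s < level i a qs y"
  shows "\<not> congested s a qs y"
proof
  assume "congested s a qs y"
  moreover have "s < i" using assms(2) level_le[of i a qs y] by linarith
  ultimately have "level i a qs y \<le> s" unfolding level_def using assms(1) by (intro Min_le) auto
  then show False using assms(2) by simp
qed

lemma congested_level:
  assumes "level i a qs y < i"
  shows "congested (level i a qs y) a qs y"
proof -
  have "level i a qs y \<in> {s \<in> {1..<i}. congested s a qs y} \<union> {i}"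
    unfolding level_def by (rule Min_in) auto
  then show ?thesis using assms by auto
qed

lemma level_eqI:
  assumes "1 \<le> s0" "s0 < i" "congested s0 a qs y" "\<And>s. 1 \<le> s \<Longrightarrow> s < s0 \<Longrightarrow> \<not> congested s a qs y"
  shows "level i a qs y = s0"
  unfolding level_def
proof (rule Min_eqI)
  show "s0 \<in> {s \<in> {1..<i}. congested s a qs y} \<union> {i}" using assms by auto
  fix s assume "s \<in> {s \<in> {1..<i}. congested s a qs y} \<union> {i}"
  then show "s0 \<le> s" using assms by (auto simp: not_less[symmetric])
qed simp

section \<open>Merging two sites\<close>

lemma has_pos_suffix_merge:
  assumes v0: "0 \<le> v0"
  shows "has_pos_suffix (A @ v0 # v1 # B) \<longleftrightarrow> has_pos_suffix (A @ (v0 + v1) # B)"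
proof
  assume "has_pos_suffix (A @ v0 # v1 # B)"
  then obtain k where k: "k < length A + 2 + length B"
    and s: "0 < sum_list (drop k (A @ v0 # v1 # B))"
    by (auto simp: has_pos_suffix_def)
  consider "k \<le> length A" | "k = Suc (length A)" | "Suc (Suc (length A)) \<le> k" by linarith
  then show "has_pos_suffix (A @ (v0 + v1) # B)"
  proof cases
    case 1
    then show ?thesis using s by (auto simp: has_pos_suffix_def intro!: exI[of _ k])
  next
    case 2
    then show ?thesis using s v0 by (auto simp: has_pos_suffix_def intro!: exI[of _ "length A"])
  next
    case 3
    define j where "j = k - Suc (Suc (length A))"
    have "k = Suc (Suc (length A + j))" using 3 by (simp add: j_def)
    then show ?thesis
      using s k by (auto simp: has_pos_suffix_def intro!: exI[of _ "Suc (length A + j)"])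
  qed
next
  assume "has_pos_suffix (A @ (v0 + v1) # B)"
  then obtain k where k: "k < length A + 1 + length B"
    and s: "0 < sum_list (drop k (A @ (v0 + v1) # B))"
    by (auto simp: has_pos_suffix_def)
  show "has_pos_suffix (A @ v0 # v1 # B)"
  proof (cases "k \<le> length A")
    case True
    then show ?thesis using s by (auto simp: has_pos_suffix_def intro!: exI[of _ k])
  next
    case False
    define j where "j = k - Suc (length A)"
    have "k = Suc (length A + j)" using False by (simp add: j_def)
    then show ?thesis
      using s k by (auto simp: has_pos_suffix_def intro!: exI[of _ "Suc (Suc (length A + j))"])
  qed
qed

lemma rotate_Suc_Cons:
  assumes "y \<le> length vr"
  shows "rotate (Suc y) (w # vr) = drop y vr @ w # take y vr"
  using rotate_append[of "w # take y vr" "drop y vr"] assms by simp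

lemma rotate_Suc_Suc_Cons:
  assumes "y \<le> length vr"
  shows "rotate (Suc (Suc y)) (v0 # v1 # vr) = drop y vr @ v0 # v1 # take y vr"
  using rotate_append[of "v0 # v1 # take y vr" "drop y vr"] assms by simp

lemma not_has_pos_suffix:
  assumes "\<forall>v\<in>set xs. v \<le> 0"
  shows "\<not> has_pos_suffix xs"
proof -
  have "sum_list (drop k xs) \<le> 0" for k
    by (rule sum_list_nonpos) (use assms in \<open>auto dest: in_set_dropD\<close>)
  then show ?thesis unfolding has_pos_suffix_def by (simp add: not_less)
qed

lemma has_pos_suffix_rotate_1: "0 < v \<Longrightarrow> has_pos_suffix (rotate 1 (v # vs))"
  unfolding has_pos_suffix_def by (auto intro!: exI[of _ "length vs"])

lemma surplus_Cons [simp]: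
  "surplus s (as # a) (q # qs) = (int (count_le s as) - of_bool q) # surplus s a qs"
  by (simp add: surplus_def)

lemma count_le_append [simp]: "count_le s (xs @ ys) = count_le s xs + count_le s ys"
  by (simp add: count_le_def)

lemma count_le_eq_0: "\<forall>p\<in>set xs. s < p \<Longrightarrow> count_le s xs = 0"
  by (auto simp: count_le_def filter_empty_conv)

lemma count_le_pos: "s0 \<in> set xs \<Longrightarrow> s0 \<le> s \<Longrightarrow> 1 \<le> count_le s xs"
  by (induction xs) (auto simp: count_le_def)

lemma count_le_remove1: "s0 \<in> set xs \<Longrightarrow> s0 \<le> s \<Longrightarrow> Suc (count_le s (remove1 s0 xs)) = count_le s xs"
  by (induction xs) (auto simp: count_le_def)

lemma not_congested_below_sizes: "\<forall>p\<in>set (concat a). s < p \<Longrightarrow> \<not> congested s a qs y"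
  unfolding congested_def
  by (intro not_has_pos_suffix) (auto simp: surplus_def count_le_eq_0 dest!: set_zip_leftD)

text \<open>Merging sites 0 and 1 into a single site \<open>b\<close> leaves the levels of all other sites unchanged,
  provided site 0 has nonnegative surplus: a positive arc that starts at site 1 can then be
  extended to start at site 0.\<close>

lemma level_merge:
  assumes len: "length qr = length ar" and y: "y < Suc (length qr)"
    and min: "\<forall>p\<in>set (concat (a0#a1#ar)) \<union> set (concat (b#ar)). s0 \<le> p"
    and merge: "\<forall>s\<ge>s0. of_bool q0 \<le> int (count_le s a0)
                   \<and> int (count_le s b) = int (count_le s a0) - of_bool q0 + int (count_le s a1)"
  shows "level i (a0#a1#ar) (q0#q1#qr) (Suc y) = level i (b#ar) (q1#qr) y"
proof -
  have "congested s (a0#a1#ar) (q0#q1#qr) (Suc y) = congested s (b#ar) (q1#qr) y" for s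
  proof (cases "s < s0")
    case True
    have lt: "s < p" if "p \<in> set (concat (a0#a1#ar)) \<union> set (concat (b#ar))" for p
      using bspec[OF min that] True by linarith
    have "\<not> congested s (a0#a1#ar) (q0#q1#qr) (Suc y)" "\<not> congested s (b#ar) (q1#qr) y"
      by (rule not_congested_below_sizes, use lt in blast)+
    then show ?thesis by simp
  next
    case False
    define v0 where "v0 = int (count_le s a0) - of_bool q0"
    define v1 where "v1 = int (count_le s a1) - of_bool q1"
    have v0: "0 \<le> v0" using merge False by (simp add: v0_def)
    have "surplus s (a0#a1#ar) (q0#q1#qr) = v0 # v1 # surplus s ar qr"
      "surplus s (b#ar) (q1#qr) = (v0 + v1) # surplus s ar qr"
      using merge False by (simp_all add: v0_def v1_def)
    moreover have "y \<le> length (surplus s ar qr)" using y len by simp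
    ultimately show ?thesis
      unfolding congested_def by (simp only: rotate_Suc_Suc_Cons rotate_Suc_Cons has_pos_suffix_merge[OF v0])
  qed
  then show ?thesis unfolding level_def by simp
qed

lemma config_weight_merge:
  assumes len: "length qr = length ar"
    and min: "\<forall>p\<in>set (concat (a0#a1#ar)) \<union> set (concat (b#ar)). s0 \<le> p"
    and merge: "\<forall>s\<ge>s0. of_bool q0 \<le> int (count_le s a0)
                   \<and> int (count_le s b) = int (count_le s a0) - of_bool q0 + int (count_le s a1)"
  shows "config_weight i t (a0#a1#ar) (q0#q1#qr)
           = (if q0 then 1 else t (level i (a0#a1#ar) (q0#q1#qr) 0)) * config_weight i t (b#ar) (q1#qr)"
proof -
  have "config_weight i t (a0#a1#ar) (q0#q1#qr) =
     (if q0 then 1 else t (level i (a0#a1#ar) (q0#q1#qr) 0)) *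
     (\<Prod>y<Suc (length qr). if (q1#qr) ! y then 1 else t (level i (a0#a1#ar) (q0#q1#qr) (Suc y)))"
    unfolding config_weight_def by (simp del: prod.lessThan_Suc add: prod.lessThan_Suc_shift)
  also have "(\<Prod>y<Suc (length qr). if (q1#qr) ! y then 1 else t (level i (a0#a1#ar) (q0#q1#qr) (Suc y)))
      = config_weight i t (b#ar) (q1#qr)"
    unfolding config_weight_def
    by (rule prod.cong) (auto simp: level_merge[OF len _ min merge] simp del: prod.lessThan_Suc)
  finally show ?thesis .
qed

lemma config_weight_nonterminal_first:
  assumes s0: "s0 \<in> set a0" and min: "\<forall>p\<in>set (concat (a0#a1#rest)). s0 \<le> p"
    and s0i: "1 \<le> s0" "s0 < i" and len: "length qs = Suc (length rest)"
  shows "config_weight i t (a0#a1#rest) (False#qs) = t s0 * config_weight i t ((a0@a1)#rest) qs"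
proof -
  obtain q1 qr where qs: "qs = q1 # qr" and lr: "length qr = length rest"
    using len by (cases qs) auto
  have "level i (a0#a1#rest) (False#q1#qr) 0 = s0"
  proof (rule level_eqI[OF s0i])
    show "congested s0 (a0 # a1 # rest) (False # q1 # qr) 0"
      unfolding congested_def surplus_Cons
      by (rule has_pos_suffix_rotate_1[unfolded One_nat_def]) (use count_le_pos[OF s0 order_refl] in simp)
    show "\<not> congested s (a0 # a1 # rest) (False # q1 # qr) 0" if "s < s0" for s
      using not_congested_below_sizes min that by (meson order_less_le_trans)
  qed
  moreover have "\<forall>p\<in>set (concat (a0#a1#rest)) \<union> set (concat ((a0@a1)#rest)). s0 \<le> p"
    using min by auto
  ultimately show ?thesis
    unfolding qs by (subst config_weight_merge[OF lr]) auto
qed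

lemma config_weight_terminal_first:
  assumes s0: "s0 \<in> set a0" and min: "\<forall>p\<in>set (concat (a0#a1#rest)). s0 \<le> p"
    and len: "length qs = Suc (length rest)"
  shows "config_weight i t (a0#a1#rest) (True#qs) = config_weight i t ((remove1 s0 a0 @ a1)#rest) qs"
proof -
  obtain q1 qr where qs: "qs = q1 # qr" and lr: "length qr = length rest"
    using len by (cases qs) auto
  have "\<forall>p\<in>set (concat (a0#a1#rest)) \<union> set (concat ((remove1 s0 a0 @ a1)#rest)). s0 \<le> p"
    using min set_remove1_subset[of s0 a0] by auto
  moreover have "\<forall>s\<ge>s0. of_bool True \<le> int (count_le s a0) \<and>
      int (count_le s (remove1 s0 a0 @ a1)) = int (count_le s a0) - of_bool True + int (count_le s a1)"
  proof (intro allI impI)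
    fix s assume "s0 \<le> s"
    then show "of_bool True \<le> int (count_le s a0) \<and>
      int (count_le s (remove1 s0 a0 @ a1)) = int (count_le s a0) - of_bool True + int (count_le s a1)"
      by (simp flip: count_le_remove1[OF s0 \<open>s0 \<le> s\<close>])
  qed
  ultimately show ?thesis
    unfolding qs by (subst config_weight_merge[OF lr]) auto
qed

lemma config_sum_merge:
  assumes s0: "s0 \<in> set a0" and min: "\<forall>p\<in>set (concat (a0#a1#rest)). s0 \<le> p"
    and s0i: "1 \<le> s0" "s0 < i" and c: "1 \<le> c"
  shows "config_sum i t (a0#a1#rest) c
           = t s0 * config_sum i t ((a0@a1)#rest) c + config_sum i t ((remove1 s0 a0 @ a1)#rest) (c - 1)"
proof -
  let ?N = "Suc (length rest)"
  have "config_sum i t (a0#a1#rest) c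
      = (\<Sum>qs\<in>bool_lists ?N c. config_weight i t (a0#a1#rest) (False # qs))
        + (\<Sum>qs\<in>bool_lists ?N (c - 1). config_weight i t (a0#a1#rest) (True # qs))"
    unfolding config_sum_def using sum_bool_lists_Suc[of _ ?N c] c by simp
  also have "(\<Sum>qs\<in>bool_lists ?N c. config_weight i t (a0#a1#rest) (False # qs))
      = t s0 * config_sum i t ((a0@a1)#rest) c"
    unfolding config_sum_def sum_distrib_left
    by (rule sum.cong) (auto simp: bool_lists_def config_weight_nonterminal_first[OF s0 min s0i])
  also have "(\<Sum>qs\<in>bool_lists ?N (c - 1). config_weight i t (a0#a1#rest) (True # qs))
      = config_sum i t ((remove1 s0 a0 @ a1)#rest) (c - 1)"
    unfolding config_sum_def
    by (rule sum.cong) (auto simp: bool_lists_def config_weight_terminal_first[OF s0 min])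
  finally show ?thesis .
qed

lemma config_weight_no_particles:
  assumes "concat a = []"
  shows "config_weight i t a qs = (\<Prod>y<length qs. if qs ! y then 1 else t i)"
proof -
  have "level i a qs y = i" for y
    using not_congested_below_sizes[of a] assms by (simp add: level_def)
  then show ?thesis unfolding config_weight_def by (simp cong: if_cong)
qed

lemma config_sum_no_particles:
  assumes e: "concat a = []" and c: "c \<le> length a"
  shows "config_sum i t a c = hsym (length a - c) (config_vars i t a c)"
proof -
  have vars: "config_vars i t a c = replicate (c + 1) (t i)"
    by (induction i) (simp_all add: config_vars_def e)
  have "config_sum i t a c = (\<Sum>qs\<in>bool_lists (length a) c. \<Prod>y<length a. if qs ! y then 1 else t i)"
    unfolding config_sum_def config_weight_no_particles[OF e]
    by (rule sum.cong) (auto simp: bool_lists_def)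
  also have "\<dots> = hsym (length a - c) (replicate (c + 1) (t i))"
    by (rule sum_uniform_weights_eq_hsym[OF c])
  finally show ?thesis by (simp add: vars)
qed

lemma config_vars_remove_min:
  assumes sizes: "sizes_below i a" and s0: "s0 \<in> set (concat a)"
    and min: "\<forall>p\<in>set (concat a). s0 \<le> p" and c: "length (concat a) \<le> c"
    and b: "concat b = remove1 s0 (concat a)"
  shows "config_vars i t a c = t s0 # config_vars i t b (c - 1)"
proof -
  let ?X = "concat a"
  have s0i: "1 \<le> s0" "s0 < i" using sizes s0 by (auto simp: sizes_below_def)
  have up: "[1..<i] = [1..<s0] @ s0 # [Suc s0..<i]"
    using upt_add_eq_append[of 1 s0 "i - s0"] s0i by (simp add: upt_conv_Cons)
  have below: "concat (map (\<lambda>s. replicate (count_list (remove1 s0 ?X) s) (t s)) [1..<s0]) = []"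
    "concat (map (\<lambda>s. replicate (count_list ?X s) (t s)) [1..<s0]) = []"
    using min by (auto simp: count_list_0_iff not_le[symmetric])
  have above: "map (\<lambda>s. replicate (count_list (remove1 s0 ?X) s) (t s)) [Suc s0..<i]
               = map (\<lambda>s. replicate (count_list ?X s) (t s)) [Suc s0..<i]"
    by simp
  have at: "count_list ?X s0 = Suc (count_list (remove1 s0 ?X) s0)"
    using s0 count_list_0_iff[of ?X s0] by simp
  have rest: "(c - 1) - length (remove1 s0 ?X) = c - length ?X"
    using s0 c length_pos_if_in_set[OF s0] by (simp add: length_remove1)
  show ?thesis
    unfolding config_vars_def b up
    by (simp only: map_append list.map concat_append concat.simps below above at rest
        replicate_Suc append.simps append_Nil append_assoc)
qed

lemma config_sum_all_terminal: "config_sum i t a (length a) = 1"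
  by (simp add: config_sum_def config_weight_def bool_lists_full del: replicate.simps)

lemma rotate_to_front:
  assumes "s0 \<in> set (concat a)" "2 \<le> length a"
  obtains r a0 a1 rest where "rotate r a = a0 # a1 # rest" "s0 \<in> set a0"
proof -
  from assms(1) obtain as where "as \<in> set a" "s0 \<in> set as" by auto
  then obtain r where r: "r < length a" "s0 \<in> set (a ! r)" by (metis in_set_conv_nth)
  obtain ra where ra: "rotate r a = ra" by simp
  have "Suc (Suc 0) \<le> length ra" using assms(2) ra by auto
  then obtain a0 a1 rest where "ra = a0 # a1 # rest" by (auto simp: Suc_le_length_iff)
  moreover have "s0 \<in> set (hd ra)"
    using r hd_rotate_conv_nth[of a r] ra by (cases a) (auto simp: mod_less)
  ultimately show ?thesis using that ra by simp
qed

lemma config_sum_eq_hsym_step: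
  assumes IH: "\<And>b c. length b = N \<Longrightarrow> sizes_below i b \<Longrightarrow> length (concat b) \<le> c \<Longrightarrow> c \<le> N
                  \<Longrightarrow> config_sum i t b c = hsym (N - c) (config_vars i t b c)"
    and N: "N = Suc (length rest)" and sizes: "sizes_below i (a0 # a1 # rest)"
    and s0: "s0 \<in> set a0" and min: "\<forall>p\<in>set (concat (a0 # a1 # rest)). s0 \<le> p"
    and c: "1 \<le> c" "c \<le> N" "length (concat (a0 # a1 # rest)) \<le> c"
  shows "config_sum i t (a0 # a1 # rest) c = hsym (Suc N - c) (config_vars i t (a0 # a1 # rest) c)"
proof -
  let ?a = "a0 # a1 # rest"
  let ?merged = "(a0 @ a1) # rest" and ?reduced = "(remove1 s0 a0 @ a1) # rest"
  have s0i: "1 \<le> s0" "s0 < i" using sizes s0 by (auto simp: sizes_below_def)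
  have reduced: "concat ?reduced = remove1 s0 (concat ?a)"
    using s0 by (simp add: remove1_append)
  have IH_merged: "config_sum i t ?merged c = hsym (N - c) (config_vars i t ?merged c)"
    by (rule IH) (use N c sizes in \<open>auto simp: sizes_below_def\<close>)
  have IH_reduced: "config_sum i t ?reduced (c - 1) = hsym (N - (c - 1)) (config_vars i t ?reduced (c - 1))"
  proof (rule IH)
    show "sizes_below i ?reduced"
      using sizes set_remove1_subset[of s0 "concat ?a"] unfolding sizes_below_def reduced by blast
    show "length (concat ?reduced) \<le> c - 1"
      using c(3) s0 unfolding reduced by (simp add: length_remove1)
  qed (use N c in auto)
  have vars: "config_vars i t ?a c = t s0 # config_vars i t ?reduced (c - 1)"
    using config_vars_remove_min[OF sizes _ min c(3) reduced] s0 by simp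
  have "config_vars i t ?merged c = config_vars i t ?a c"
    by (simp add: config_vars_def)
  then have "config_sum i t ?a c = t s0 * hsym (N - c) (t s0 # config_vars i t ?reduced (c - 1))
                                   + hsym (N - (c - 1)) (config_vars i t ?reduced (c - 1))"
    using config_sum_merge[OF s0 min s0i c(1), of t] IH_merged IH_reduced vars by simp
  also have "\<dots> = hsym (Suc N - c) (t s0 # config_vars i t ?reduced (c - 1))"
    using hsym_Cons_rec[of "Suc N - c" "t s0" "config_vars i t ?reduced (c - 1)"] c
    by (simp add: Suc_diff_le)
  finally show ?thesis unfolding vars .
qed

theorem config_sum_eq_hsym:
  "length a = N \<Longrightarrow> sizes_below i a \<Longrightarrow> length (concat a) \<le> c \<Longrightarrow> c \<le> N
    \<Longrightarrow> config_sum i t a c = hsym (N - c) (config_vars i t a c)"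
proof (induction N arbitrary: a c)
  case 0
  then show ?case using config_sum_no_particles[of a c] by simp
next
  case (Suc N)
  consider "c = Suc N" | "concat a = []" | "c \<le> N" "concat a \<noteq> []" using Suc.prems by linarith
  then show ?case
  proof cases
    case 1
    then show ?thesis using config_sum_all_terminal[of i t a] Suc.prems(1) by simp
  next
    case 2
    then show ?thesis using config_sum_no_particles[OF 2, of c i t] Suc.prems by simp
  next
    case 3
    define s0 where "s0 = Min (set (concat a))"
    have "set (concat a) \<noteq> {}" using 3 by simp
    then have s0: "s0 \<in> set (concat a)" unfolding s0_def by (rule Min_in[OF finite_set])
    have c: "1 \<le> c" using Suc.prems(3) s0 by (cases "concat a") auto
    have "2 \<le> length a" using Suc.prems(1) 3 c by simp
    then obtain r a0 a1 rest where ar: "rotate r a = a0 # a1 # rest" and s0a0: "s0 \<in> set a0"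
      using rotate_to_front[OF s0] by blast
    have "config_sum i t a c = config_sum i t (rotate r a) c"
      by (simp add: config_sum_rotate)
    also have "\<dots> = hsym (Suc N - c) (config_vars i t (rotate r a) c)"
      unfolding ar
    proof (rule config_sum_eq_hsym_step[OF Suc.IH _ _ s0a0])
      show "N = Suc (length rest)" using Suc.prems(1) ar by (metis length_Cons length_rotate nat.inject)
      show "sizes_below i (a0 # a1 # rest)" "\<forall>p\<in>set (concat (a0 # a1 # rest)). s0 \<le> p"
        using Suc.prems(2) arg_cong[OF ar, of "\<lambda>b. set (concat b)"]
        by (auto simp: sizes_below_def s0_def)
      show "length (concat (a0 # a1 # rest)) \<le> c"
        using Suc.prems(3) length_concat_rotate[of r a] ar by simp
    qed (use c 3 in auto)
    also have "config_vars i t (rotate r a) c = config_vars i t a c"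
      by (rule config_vars_rotate)
    finally show ?thesis .
  qed
qed

section \<open>Queue dynamics\<close>

definition cyclic_pred :: "nat \<Rightarrow> nat \<Rightarrow> nat" where
  "cyclic_pred n z = (z + n - 1) mod n"

definition cyclic_offset :: "nat \<Rightarrow> nat \<Rightarrow> nat \<Rightarrow> nat" where
  "cyclic_offset n p z = (z + n - p) mod n"

lemma cyclic_offset_less: "0 < n \<Longrightarrow> cyclic_offset n p z < n"
  by (simp add: cyclic_offset_def)

lemma add_cyclic_offset:
  assumes "p < n" "z < n"
  shows "(p + cyclic_offset n p z) mod n = z"
proof -
  have "(p + (z + n - p) mod n) mod n = (p + (z + n - p)) mod n" by (simp add: mod_add_right_eq)
  also have "p + (z + n - p) = z + n" using assms by simp
  finally show ?thesis using assms by (simp add: cyclic_offset_def)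
qed

lemma cyclic_offset_add:
  assumes "p < n" "d < n"
  shows "cyclic_offset n p ((p + d) mod n) = d"
proof -
  have "((p + d) mod n + n - p) mod n = ((p + d) mod n + (n - p)) mod n" using assms by simp
  also have "\<dots> = (p + d + (n - p)) mod n" by (simp add: mod_add_left_eq)
  also have "p + d + (n - p) = d + n" using assms by simp
  finally show ?thesis using assms by (simp add: cyclic_offset_def)
qed

lemma cyclic_offset_pred:
  assumes p: "p < n" and z: "z < n"
  shows "cyclic_offset n p (cyclic_pred n z)
           = (if cyclic_offset n p z = 0 then n - 1 else cyclic_offset n p z - 1)"
proof -
  define d where "d = cyclic_offset n p z"
  have d: "d < n" using p by (simp add: d_def cyclic_offset_less)
  have "cyclic_pred n z = (z + (n - 1)) mod n" unfolding cyclic_pred_def using z by simp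
  also have "\<dots> = (p + d + (n - 1)) mod n"
    using add_cyclic_offset[OF p z] by (metis d_def mod_add_left_eq)
  finally have pz: "cyclic_pred n z = (p + d + (n - 1)) mod n" .
  show ?thesis
  proof (cases "d = 0")
    case True
    then show ?thesis using pz cyclic_offset_add[OF p, of "n - 1"] p by (simp add: d_def)
  next
    case False
    have "cyclic_pred n z = (p + (d - 1) + n) mod n" using pz False p by (simp add: algebra_simps)
    then have "cyclic_pred n z = (p + (d - 1)) mod n" by simp
    then show ?thesis using cyclic_offset_add[OF p, of "d - 1"] d False by (simp add: d_def)
  qed
qed

lemma cyclic_offset_eq_iff:
  assumes "p < n" "z < n" "d < n"
  shows "cyclic_offset n p z = d \<longleftrightarrow> z = (p + d) mod n"
  using add_cyclic_offset[OF assms(1,2)] cyclic_offset_add[OF assms(1,3)] by auto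

text \<open>A particle starting at \<open>p\<close> and stopping at offset \<open>d\<close> enters site \<open>z\<close> (from the previous site, or
  by starting there) exactly when it leaves \<open>z\<close> or stops there.\<close>

lemma cyclic_offset_balance:
  assumes p: "p < n" and z: "z < n" and d: "d < n"
  shows "of_bool (cyclic_offset n p (cyclic_pred n z) < d) + of_bool (z = p)
           = of_bool (z = (p + d) mod n) + (of_bool (cyclic_offset n p z < d) :: nat)"
  using cyclic_offset_pred[OF p z] cyclic_offset_eq_iff[OF p z d] cyclic_offset_eq_iff[OF p z, of 0] p d
  by (auto simp: of_bool_def)

text \<open>\<open>queue_flow n Q P Occ V f\<close> is the state of a queue after the particles starting at the sites
  in \<open>P\<close> have entered: \<open>Occ\<close> are the occupied terminal sites, \<open>V\<close> the visited sites, and \<open>f z\<close>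
  counts the particles that moved on from site \<open>z\<close> to the next site. The equations are
  conservation of particles at each site.\<close>

definition queue_flow :: "nat \<Rightarrow> nat set \<Rightarrow> nat set \<Rightarrow> nat set \<Rightarrow> nat set \<Rightarrow> (nat \<Rightarrow> nat) \<Rightarrow> bool"
  where "queue_flow n Q P Occ V f \<longleftrightarrow> finite P \<and> Occ \<subseteq> Q \<and> card Occ = card P \<and>
     (\<forall>z<n. f (cyclic_pred n z) + of_bool (z \<in> P) = of_bool (z \<in> Occ) + f z) \<and>
     (\<forall>z<n. z \<in> Q - Occ \<longrightarrow> f (cyclic_pred n z) + of_bool (z \<in> P) = 0) \<and>
     (\<forall>z<n. z \<in> V \<longleftrightarrow> 0 < f (cyclic_pred n z) + of_bool (z \<in> P))"

definition queue_run :: "nat \<Rightarrow> nat set \<Rightarrow> (nat \<Rightarrow> nat) \<Rightarrow> nat list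
      \<Rightarrow> nat set \<times> (nat \<Rightarrow> nat option) \<Rightarrow> nat set \<times> (nat \<Rightarrow> nat option)" where
  "queue_run n Q sz L = fold (\<lambda>k. step n Q k (sz k)) L"

lemma queue_flow_conservation:
  "queue_flow n Q P Occ V f \<Longrightarrow> z < n
    \<Longrightarrow> f (cyclic_pred n z) + of_bool (z \<in> P) = of_bool (z \<in> Occ) + f z"
  unfolding queue_flow_def by blast

lemma queue_flow_free_site:
  assumes "queue_flow n Q P Occ V f" "z < n" "z \<in> Q - Occ"
  shows "f z = 0"
proof -
  have "f (cyclic_pred n z) + of_bool (z \<in> P) = 0" using assms unfolding queue_flow_def by blast
  then show ?thesis using queue_flow_conservation[OF assms(1,2)] assms(3) by simp
qed

lemma card_less_imp_free:
  assumes "finite Q" "Occ \<subseteq> Q" "card Occ < card Q"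
  shows "Q - Occ \<noteq> {}"
  using assms card_mono[of Q Occ] by auto

lemma step_first_free:
  assumes free: "Q - Occ \<noteq> {}" and Q: "Q \<subseteq> {..<n}" and p: "p < n"
  obtains d where "d < n" "(p + d) mod n \<in> Q - Occ"
    "\<And>z. z < n \<Longrightarrow> z \<in> Q - Occ \<Longrightarrow> d \<le> cyclic_offset n p z"
    "step n Q p s (Occ, fv) = (insert ((p + d) mod n) Occ,
        \<lambda>x. if x < n \<and> cyclic_offset n p x \<le> d \<and> fv x = None then Some s else fv x)"
proof
  let ?off = "cyclic_offset n p"
  define d where "d = (LEAST d. (p + d) mod n \<in> Q - Occ)"
  obtain z0 where z0: "z0 \<in> Q - Occ" using free by blast
  have z0n: "z0 < n" using z0 Q by auto
  have ex: "(p + ?off z0) mod n \<in> Q - Occ" using add_cyclic_offset[OF p z0n] z0 by simp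
  show dn: "d < n"
    using Least_le[of "\<lambda>d. (p + d) mod n \<in> Q - Occ", OF ex] cyclic_offset_less[of n p z0] p
    unfolding d_def by linarith
  show "(p + d) mod n \<in> Q - Occ" unfolding d_def by (rule LeastI) (rule ex)
  show "\<And>z. z < n \<Longrightarrow> z \<in> Q - Occ \<Longrightarrow> d \<le> ?off z"
    unfolding d_def by (rule Least_le) (simp add: add_cyclic_offset[OF p])
  have visited: "z \<in> set (map (\<lambda>d'. (p + d') mod n) [0..<Suc d]) \<longleftrightarrow> z < n \<and> ?off z \<le> d" for z
  proof
    assume "z \<in> set (map (\<lambda>d'. (p + d') mod n) [0..<Suc d])"
    then obtain d' where "d' < Suc d" "z = (p + d') mod n" by (auto simp del: upt_Suc)
    then show "z < n \<and> ?off z \<le> d" using cyclic_offset_add[OF p, of d'] dn p by simp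
  next
    assume "z < n \<and> ?off z \<le> d"
    then have "?off z \<in> set [0..<Suc d]" "z = (p + ?off z) mod n"
      using add_cyclic_offset[OF p] by (simp_all del: upt_Suc)
    then show "z \<in> set (map (\<lambda>d'. (p + d') mod n) [0..<Suc d])"
      unfolding set_map by (rule rev_image_eqI)
  qed
  have "step n Q p s (Occ, fv) = (insert ((p + d) mod n) Occ,
      \<lambda>x. if x \<in> set (map (\<lambda>d'. (p + d') mod n) [0..<Suc d]) \<and> fv x = None then Some s else fv x)"
    using free by (simp add: step_def Let_def d_def)
  then show "step n Q p s (Occ, fv) = (insert ((p + d) mod n) Occ,
      \<lambda>x. if x < n \<and> ?off x \<le> d \<and> fv x = None then Some s else fv x)"
    unfolding visited by (simp add: conj_assoc)
qed

text \<open>The new particle increases the flow exactly on the edges it crosses, namely those leaving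
  the sites at offset less than \<open>d\<close> from its starting site \<open>p\<close>.\<close>

lemma queue_flow_step:
  assumes inv: "queue_flow n Q P (fst st) {z. snd st z \<noteq> None} f"
    and Q: "Q \<subseteq> {..<n}" and p: "p < n" "p \<notin> P" and card: "card P < card Q"
  shows "\<exists>f'. queue_flow n Q (insert p P) (fst (step n Q p s st)) {z. snd (step n Q p s st) z \<noteq> None} f'"
proof -
  obtain Occ fv where st: "st = (Occ, fv)" by fastforce
  have fQ: "finite Q" using Q finite_subset by blast
  have I: "finite P" "Occ \<subseteq> Q" "card Occ = card P"
    "\<forall>z<n. f (cyclic_pred n z) + of_bool (z \<in> P) = of_bool (z \<in> Occ) + f z"
    "\<forall>z<n. z \<in> Q - Occ \<longrightarrow> f (cyclic_pred n z) + of_bool (z \<in> P) = 0"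
    "\<forall>z<n. (fv z \<noteq> None) \<longleftrightarrow> 0 < f (cyclic_pred n z) + of_bool (z \<in> P)"
    using inv[unfolded queue_flow_def mem_Collect_eq st fst_conv snd_conv] by meson+
  have free: "Q - Occ \<noteq> {}" using card_less_imp_free[OF fQ I(2)] I(3) card by simp
  let ?off = "cyclic_offset n p"
  obtain d where dn: "d < n" and efree: "(p + d) mod n \<in> Q - Occ"
    and d_min: "\<And>z. z < n \<Longrightarrow> z \<in> Q - Occ \<Longrightarrow> d \<le> ?off z"
    and step: "step n Q p s (Occ, fv) = (insert ((p + d) mod n) Occ,
        \<lambda>x. if x < n \<and> ?off x \<le> d \<and> fv x = None then Some s else fv x)"
    using step_first_free[OF free Q p(1)] by blast
  define e where "e = (p + d) mod n"
  have off_p: "z < n \<Longrightarrow> z = p \<longleftrightarrow> ?off z = 0" for z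
    using cyclic_offset_eq_iff[OF p(1), of z 0] p by auto
  have off_e: "z < n \<Longrightarrow> z = e \<longleftrightarrow> ?off z = d" for z
    using cyclic_offset_eq_iff[OF p(1) _ dn, of z] by (auto simp: e_def)
  define f' where "f' z = f z + of_bool (?off z < d)" for z
  have eO: "e \<notin> Occ" using efree by (simp add: e_def)
  have "queue_flow n Q (insert p P) (insert e Occ)
      {z. (if z < n \<and> ?off z \<le> d \<and> fv z = None then Some s else fv z) \<noteq> None} f'"
    unfolding queue_flow_def
  proof (intro conjI allI impI)
    show "finite (insert p P)" using I(1) by simp
    show "insert e Occ \<subseteq> Q" using I(2) efree by (auto simp: e_def)
    show "card (insert e Occ) = card (insert p P)"
      using I(1,3) eO finite_subset[OF I(2) fQ] p(2) by simp
  next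
    fix z assume z: "z < n"
    have c: "f (cyclic_pred n z) + of_bool (z \<in> P) = of_bool (z \<in> Occ) + f z" using I(4) z by simp
    have key: "of_bool (?off (cyclic_pred n z) < d) + of_bool (z = p)
                 = of_bool (z = e) + (of_bool (?off z < d) :: nat)"
      unfolding e_def by (rule cyclic_offset_balance[OF p(1) z dn])
    show "f' (cyclic_pred n z) + of_bool (z \<in> insert p P) = of_bool (z \<in> insert e Occ) + f' z"
      using c key p(2) eO by (auto simp: f'_def of_bool_def split: if_splits)
  next
    fix z assume z: "z < n" and zf: "z \<in> Q - insert e Occ"
    have c: "f (cyclic_pred n z) + of_bool (z \<in> P) = 0" using I(5) z zf by simp
    have "d \<le> ?off z" using d_min[OF z] zf by simp
    moreover have "?off z \<noteq> d" using off_e[OF z] zf by simp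
    ultimately have gt: "d < ?off z" by simp
    then have "z \<noteq> p" using off_p[OF z] by simp
    moreover have "\<not> ?off (cyclic_pred n z) < d" using cyclic_offset_pred[OF p(1) z] gt by simp
    ultimately show "f' (cyclic_pred n z) + of_bool (z \<in> insert p P) = 0"
      using c by (simp add: f'_def)
  next
    fix z assume z: "z < n"
    have "(if z < n \<and> ?off z \<le> d \<and> fv z = None then Some s else fv z) \<noteq> None
          \<longleftrightarrow> fv z \<noteq> None \<or> ?off z \<le> d"
      using z by auto
    also have "\<dots> \<longleftrightarrow> 0 < f' (cyclic_pred n z) + of_bool (z \<in> insert p P)"
      using I(6) z cyclic_offset_pred[OF p(1) z] off_p[OF z] dn by (auto simp: f'_def of_bool_def)
    finally show "z \<in> {z. (if z < n \<and> ?off z \<le> d \<and> fv z = None then Some s else fv z) \<noteq> None}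
          \<longleftrightarrow> 0 < f' (cyclic_pred n z) + of_bool (z \<in> insert p P)" by simp
  qed
  then show ?thesis unfolding st step e_def fst_conv snd_conv by blast
qed

lemma queue_flow_run:
  assumes "distinct L" "set L \<subseteq> {..<n}" "card (set L) < card Q" "Q \<subseteq> {..<n}"
  shows "\<exists>f. queue_flow n Q (set L) (fst (queue_run n Q sz L ({}, \<lambda>_. None)))
                {z. snd (queue_run n Q sz L ({}, \<lambda>_. None)) z \<noteq> None} f"
  using assms
proof (induction L rule: rev_induct)
  case Nil
  have "queue_flow n Q {} {} {} (\<lambda>_. 0)" by (simp add: queue_flow_def)
  then show ?case by (auto simp: queue_run_def)
next
  case (snoc x xs)
  have "card (set xs) \<le> card (set (xs @ [x]))" by (rule card_mono) auto
  then have c: "card (set xs) < card Q" using snoc.prems(3) by linarith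
  then obtain f where "queue_flow n Q (set xs) (fst (queue_run n Q sz xs ({}, \<lambda>_. None)))
                {z. snd (queue_run n Q sz xs ({}, \<lambda>_. None)) z \<noteq> None} f"
    using snoc.IH snoc.prems by auto
  from queue_flow_step[OF this] snoc.prems c show ?case by (simp add: queue_run_def)
qed

lemma queue_flow_visited_iff:
  assumes "queue_flow n Q P Occ V f" "x < n" "x \<notin> Q"
  shows "x \<in> V \<longleftrightarrow> 0 < f x"
proof -
  have "x \<notin> Occ" using assms by (auto simp: queue_flow_def)
  then show ?thesis using assms by (auto simp: queue_flow_def of_bool_def)
qed

lemma queue_flow_telescope:
  assumes inv: "queue_flow n Q P Occ V f" and n: "0 < n" and x: "x < n" and k: "k \<le> n"
  shows "(\<Sum>l\<in>{k..<n}. of_bool ((x + 1 + l) mod n \<in> P) - of_bool ((x + 1 + l) mod n \<in> Occ))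
           = int (f x) - int (f ((x + k) mod n))"
proof -
  define w where "w l = (x + 1 + l) mod n" for l
  define g where "g l = int (f ((x + l) mod n))" for l
  have pred_w: "cyclic_pred n (w l) = (x + l) mod n" for l
  proof -
    have "cyclic_pred n (w l) = ((x + 1 + l) mod n + (n - 1)) mod n"
      unfolding cyclic_pred_def w_def using n by simp
    also have "\<dots> = (x + 1 + l + (n - 1)) mod n" by (simp add: mod_add_left_eq)
    also have "x + 1 + l + (n - 1) = (x + l) + n" using n by simp
    finally show ?thesis by simp
  qed
  have step: "of_bool (w l \<in> P) - of_bool (w l \<in> Occ) = g (Suc l) - g l" for l
  proof -
    have "w l < n" using n by (simp add: w_def)
    from queue_flow_conservation[OF inv this]
    have "int (f ((x + l) mod n)) + of_bool (w l \<in> P) = of_bool (w l \<in> Occ) + int (f (w l))"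
      unfolding pred_w by (metis of_nat_add of_nat_of_bool)
    moreover have "g (Suc l) = int (f (w l))" by (simp add: g_def w_def)
    ultimately show ?thesis unfolding g_def by linarith
  qed
  have "(\<Sum>l\<in>{k..<n}. of_bool (w l \<in> P) - of_bool (w l \<in> Occ)) = g n - g k"
    unfolding step by (rule sum_Suc_diff'[OF k])
  then show ?thesis using x by (simp add: g_def w_def)
qed

lemma queue_flow_arc_imp_pos:
  assumes inv: "queue_flow n Q P Occ V f" and x: "x < n" and k: "k < n"
    and pos: "(0::int) < (\<Sum>l\<in>{k..<n}. of_bool ((x + 1 + l) mod n \<in> P) - of_bool ((x + 1 + l) mod n \<in> Q))"
  shows "0 < f x"
proof -
  have "Occ \<subseteq> Q" using inv by (simp add: queue_flow_def)
  then have "(\<Sum>l\<in>{k..<n}. of_bool ((x + 1 + l) mod n \<in> P) - of_bool ((x + 1 + l) mod n \<in> Q))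
      \<le> (\<Sum>l\<in>{k..<n}. of_bool ((x + 1 + l) mod n \<in> P) - (of_bool ((x + 1 + l) mod n \<in> Occ) :: int))"
    by (intro sum_mono) auto
  also have "\<dots> \<le> int (f x)"
    using queue_flow_telescope[OF inv _ x, of k] k by simp
  finally show ?thesis using pos by simp
qed

text \<open>For the converse, take the arc that begins right after the last free terminal site before
  \<open>x\<close>: no particle has crossed into it, and all its terminal sites are occupied.\<close>

lemma queue_flow_pos_imp_arc:
  assumes inv: "queue_flow n Q P Occ V f" and card: "card P < card Q" and Q: "Q \<subseteq> {..<n}"
    and x: "x < n" "x \<notin> Q" and fx: "0 < f x"
  shows "\<exists>k<n. (0::int) < (\<Sum>l\<in>{k..<n}. of_bool ((x + 1 + l) mod n \<in> P) - of_bool ((x + 1 + l) mod n \<in> Q))"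
proof -
  have n: "0 < n" using x by simp
  have OccQ: "Occ \<subseteq> Q" using inv by (simp add: queue_flow_def)
  define w where "w l = (x + 1 + l) mod n" for l
  define S where "S = {l. l < n \<and> w l \<in> Q - Occ}"
  have fQ: "finite Q" using Q finite_subset by blast
  have "Q - Occ \<noteq> {}" using card_less_imp_free[OF fQ OccQ] inv card by (simp add: queue_flow_def)
  then obtain z where z: "z \<in> Q - Occ" "z < n" using Q by auto
  then have "S \<noteq> {}"
    using add_cyclic_offset[of "(x + 1) mod n" n z] n
    by (auto simp: S_def w_def mod_add_left_eq intro!: exI[of _ "cyclic_offset n ((x + 1) mod n) z"]
        cyclic_offset_less)
  define l0 where "l0 = Max S"
  have "finite S" by (simp add: S_def)
  then have l0S: "l0 \<in> S" and l0_max: "\<And>l. l \<in> S \<Longrightarrow> l \<le> l0"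
    using \<open>S \<noteq> {}\<close> unfolding l0_def by (simp_all add: Max_in)
  have "w (n - 1) = x" using n x by (simp add: w_def)
  then have "l0 \<noteq> n - 1" "l0 < n" using l0S x by (auto simp: S_def)
  then have l0n: "Suc l0 < n" by simp
  have "f (w l0) = 0"
    using l0S Q by (intro queue_flow_free_site[OF inv]) (auto simp: S_def)
  have "(\<Sum>l\<in>{Suc l0..<n}. of_bool ((x + 1 + l) mod n \<in> P) - of_bool ((x + 1 + l) mod n \<in> Q))
      = (\<Sum>l\<in>{Suc l0..<n}. of_bool ((x + 1 + l) mod n \<in> P) - (of_bool ((x + 1 + l) mod n \<in> Occ) :: int))"
  proof (rule sum.cong)
    fix l assume l: "l \<in> {Suc l0..<n}"
    then have "l \<notin> S" using l0_max by fastforce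
    then show "of_bool ((x + 1 + l) mod n \<in> P) - of_bool ((x + 1 + l) mod n \<in> Q)
             = (of_bool ((x + 1 + l) mod n \<in> P) - of_bool ((x + 1 + l) mod n \<in> Occ) :: int)"
      using l OccQ by (auto simp: S_def w_def)
  qed simp
  also have "\<dots> = int (f x)"
    using queue_flow_telescope[OF inv n x(1), of "Suc l0"] l0n \<open>f (w l0) = 0\<close> by (simp add: w_def)
  finally show ?thesis using fx l0n by (intro exI[of _ "Suc l0"]) simp
qed

lemma queue_flow_pos_iff:
  assumes "queue_flow n Q P Occ V f" "card P < card Q" "Q \<subseteq> {..<n}" "x < n" "x \<notin> Q"
  shows "0 < f x \<longleftrightarrow>
    (\<exists>k<n. (0::int) < (\<Sum>l\<in>{k..<n}. of_bool ((x + 1 + l) mod n \<in> P) - of_bool ((x + 1 + l) mod n \<in> Q)))"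
  using queue_flow_pos_imp_arc[OF assms] queue_flow_arc_imp_pos[OF assms(1,4)] by blast

lemma step_keeps_visitor: "snd st z = Some v \<Longrightarrow> snd (step n Q j s st) z = Some v"
  by (simp add: step_def Let_def)

lemma step_new_visitor: "snd st z = None \<Longrightarrow> snd (step n Q j s st) z \<in> {None, Some s}"
  by (simp add: step_def Let_def)

lemma step_visits_start:
  assumes "j < n"
  shows "snd (step n Q j s st) j \<noteq> None"
proof -
  have "j \<in> set (map (\<lambda>d'. (j + d') mod n) [0..<Suc d])" for d
  proof -
    have "(0::nat) \<in> set [0..<Suc d]" by (simp del: upt_Suc)
    moreover have "j = (j + 0) mod n" using assms by simp
    ultimately show ?thesis unfolding set_map by (rule rev_image_eqI)
  qed
  then show ?thesis unfolding step_def Let_def snd_conv by simp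
qed

lemma queue_run_append [simp]: "queue_run n Q sz (xs @ ys) st = queue_run n Q sz ys (queue_run n Q sz xs st)"
  by (simp add: queue_run_def)

lemma queue_run_keeps_visitor: "snd st z = Some v \<Longrightarrow> snd (queue_run n Q sz L st) z = Some v"
  by (induction L arbitrary: st) (auto simp: queue_run_def step_keeps_visitor)

lemma queue_run_new_visitor:
  "\<forall>k\<in>set L. sz k = s \<Longrightarrow> snd st z = None \<Longrightarrow> snd (queue_run n Q sz L st) z \<in> {None, Some s}"
proof (induction L arbitrary: st)
  case Nil then show ?case by (simp add: queue_run_def)
next
  case (Cons k L)
  have "snd (step n Q k (sz k) st) z \<in> {None, Some s}"
    using step_new_visitor[OF Cons.prems(2)] Cons.prems(1) by simp
  then consider "snd (step n Q k (sz k) st) z = None" | "snd (step n Q k (sz k) st) z = Some s"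
    by auto
  then show ?case
  proof cases
    case 1
    then show ?thesis using Cons.IH Cons.prems(1) by (simp add: queue_run_def)
  next
    case 2
    then show ?thesis using queue_run_keeps_visitor[OF 2, of n Q sz L] by (simp add: queue_run_def)
  qed
qed

lemma queue_run_visits_start:
  "k0 \<in> set L \<Longrightarrow> k0 < n \<Longrightarrow> snd (queue_run n Q sz L st) k0 \<noteq> None"
proof (induction L arbitrary: st)
  case Nil then show ?case by simp
next
  case (Cons k L)
  show ?case
  proof (cases "k = k0")
    case True
    then obtain v where "snd (step n Q k (sz k) st) k0 = Some v"
      using step_visits_start[OF Cons.prems(2)] by blast
    then show ?thesis using queue_run_keeps_visitor[of _ k0 v n Q sz L] by (simp add: queue_run_def)
  next
    case False
    then show ?thesis using Cons by (simp add: queue_run_def)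
  qed
qed

lemma sorted_eq_filter_append:
  "sorted (map g xs) \<Longrightarrow> xs = filter (\<lambda>k. g k \<le> s) xs @ filter (\<lambda>k. \<not> g k \<le> s) xs"
proof (induction xs)
  case (Cons x xs)
  show ?case
  proof (cases "g x \<le> s")
    case False
    then have "\<forall>y\<in>set xs. \<not> g y \<le> s" using Cons.prems by auto
    then show ?thesis using False by (simp add: filter_empty_conv)
  qed (use Cons in simp)
qed simp

lemma queue_run_first_visitor:
  assumes sorted: "sorted (map sz L)"
    and none: "snd (queue_run n Q sz (filter (\<lambda>k. sz k \<le> s - 1) L) st) x = None"
    and some: "snd (queue_run n Q sz (filter (\<lambda>k. sz k \<le> s) L) st) x \<noteq> None"
  shows "snd (queue_run n Q sz L st) x = Some s"
proof -
  define L1 where "L1 = filter (\<lambda>k. sz k \<le> s - 1) L"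
  define L2 where "L2 = filter (\<lambda>k. sz k \<le> s) L"
  define M where "M = filter (\<lambda>k. \<not> sz k \<le> s - 1) L2"
  have "L2 = filter (\<lambda>k. sz k \<le> s - 1) L2 @ M"
    unfolding M_def L2_def by (rule sorted_eq_filter_append[OF sorted_filter[OF sorted]])
  also have "filter (\<lambda>k. sz k \<le> s - 1) L2 = L1"
    unfolding L1_def L2_def by (simp add: filter_filter) (metis (lifting) diff_le_self le_trans)
  finally have L2: "L2 = L1 @ M" .
  have "\<forall>k\<in>set M. sz k = s" by (auto simp: M_def L2_def)
  then have "snd (queue_run n Q sz L2 st) x \<in> {None, Some s}"
    unfolding L2 queue_run_append by (rule queue_run_new_visitor) (use none in \<open>simp add: L1_def\<close>)
  then have "snd (queue_run n Q sz L2 st) x = Some s" using some by (auto simp: L2_def)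
  then show ?thesis
    by (subst sorted_eq_filter_append[OF sorted, of s]) (simp add: queue_run_keeps_visitor L2_def)
qed

lemma sorted_map_key_pair:
  assumes "sorted (map (\<lambda>k. (g k :: nat, k :: nat)) xs)"
  shows "sorted (map g xs)"
proof -
  have "g (xs ! i) \<le> g (xs ! j)" if "i \<le> j" "j < length xs" for i j
  proof -
    have "(g (xs ! i), xs ! i) \<le> (g (xs ! j), xs ! j)"
      using assms that unfolding sorted_iff_nth_mono by simp
    then show ?thesis by (auto simp: less_eq_prod_simp)
  qed
  then show ?thesis unfolding sorted_iff_nth_mono by simp
qed

lemma entry_order_facts:
  "distinct (entry_order i u)" "set (entry_order i u) = {0..<length u}"
  "sorted (map (psize i u) (entry_order i u))"
proof -
  show "distinct (entry_order i u)" "set (entry_order i u) = {0..<length u}"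
    by (simp_all add: entry_order_def)
  have "sorted (map (\<lambda>k. (psize i u k, k)) (entry_order i u))"
    unfolding entry_order_def by (rule sorted_sort_key)
  then show "sorted (map (psize i u) (entry_order i u))" by (rule sorted_map_key_pair)
qed

section \<open>Words as configurations\<close>

definition site_particles :: "enat \<Rightarrow> nat list" where
  "site_particles x = (case x of enat j \<Rightarrow> [j] | \<infinity> \<Rightarrow> [])"

definition config_of :: "enat list \<Rightarrow> nat list list" where
  "config_of u = map site_particles u"

definition terminal_mask :: "nat \<Rightarrow> nat set \<Rightarrow> bool list" where
  "terminal_mask n Q = map (\<lambda>z. z \<in> Q) [0..<n]"

lemma length_config_of [simp]: "length (config_of u) = length u"
  by (simp add: config_of_def)

lemma length_terminal_mask [simp]: "length (terminal_mask n Q) = n"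
  by (simp add: terminal_mask_def)

lemma count_list_concat_config_of: "count_list (concat (config_of u)) j = count_list u (enat j)"
  by (induction u) (auto simp: config_of_def site_particles_def split: enat.split)

lemma length_concat_config_of: "length (concat (config_of u)) = card {k. k < length u \<and> u ! k \<noteq> \<infinity>}"
proof -
  have "length (concat (config_of u)) = length (filter (\<lambda>x. x \<noteq> \<infinity>) u)"
    by (induction u) (auto simp: config_of_def site_particles_def split: enat.split)
  then show ?thesis by (simp add: length_filter_conv_card)
qed

lemma set_concat_config_of: "p \<in> set (concat (config_of u)) \<longleftrightarrow> enat p \<in> set u"
  by (induction u) (auto simp: config_of_def site_particles_def split: enat.split)

lemma has_type_entry:
  "has_type u ms \<Longrightarrow> x \<in> set u \<Longrightarrow> x = \<infinity> \<or> (\<exists>j. x = enat j \<and> 1 \<le> j \<and> j \<le> length ms)"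
  by (auto simp: has_type_def)

lemma psize_cases:
  assumes "has_type u ms" "length ms = i - 1" "k < length u"
  shows "u ! k = \<infinity> \<and> psize i u k = i \<or> u ! k = enat (psize i u k) \<and> 1 \<le> psize i u k \<and> psize i u k < i"
  using has_type_entry[OF assms(1) nth_mem[OF assms(3)]] assms(2) by (auto simp: psize_def)

lemma sizes_below_config_of:
  assumes "has_type u ms" "length ms = i - 1"
  shows "sizes_below i (config_of u)"
  unfolding sizes_below_def
proof
  fix p assume "p \<in> set (concat (config_of u))"
  then have "enat p \<in> set u" by (simp only: set_concat_config_of)
  then show "1 \<le> p \<and> p < i" using has_type_entry[OF assms(1)] assms(2) by fastforce
qed

lemma count_config_of:
  assumes "has_type u ms" "length ms = i - 1" "j \<in> {1..<i}"
  shows "count_list (concat (config_of u)) j = ms ! (j - 1)"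
proof -
  have "count_list u (enat j) = length (filter (\<lambda>x. x = enat j) u)" by (induction u) auto
  moreover have "j \<in> {1..length ms}" using assms(2,3) by auto
  ultimately show ?thesis using assms(1) by (simp add: count_list_concat_config_of has_type_def)
qed

lemma length_concat_config_of_type:
  assumes ht: "has_type u ms" and lm: "length ms = i - 1" and i: "1 \<le> i"
  shows "length (concat (config_of u)) = sum_list ms"
proof -
  have "length (concat (config_of u)) = (\<Sum>j\<in>{1..<i}. count_list (concat (config_of u)) j)"
    by (rule sum_count_set[symmetric])
      (use sizes_below_config_of[OF ht lm] in \<open>auto simp: sizes_below_def\<close>)
  also have "\<dots> = (\<Sum>j\<in>{1..<i}. ms ! (j - 1))"
    by (rule sum.cong) (simp_all add: count_config_of[OF ht lm])
  also have "\<dots> = (\<Sum>l<i - 1. ms ! l)"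
    using sum.shift_bounds_nat_ivl[of "\<lambda>j. ms ! (j - 1)" 0 1 "i - 1"] i
    by (simp add: atLeast0LessThan)
  also have "\<dots> = sum_list ms" using lm by (simp add: sum_list_sum_nth atLeast0LessThan)
  finally show ?thesis .
qed

lemma config_vars_config_of:
  assumes "has_type u ms" "length ms = i - 1" "1 \<le> i"
  shows "config_vars i t (config_of u) c
           = concat (map (\<lambda>j. replicate (ms ! (j - 1)) (t j)) [1..<i])
             @ replicate (c - sum_list ms + 1) (t i)"
proof -
  have counts: "map (\<lambda>j. replicate (count_list (concat (config_of u)) j) (t j)) [1..<i]
      = map (\<lambda>j. replicate (ms ! (j - 1)) (t j)) [1..<i]"
    by (rule map_cong) (simp_all add: count_config_of[OF assms(1,2)])
  show ?thesis unfolding config_vars_def length_concat_config_of_type[OF assms] counts ..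
qed

lemma surplus_config_of:
  assumes "has_type u ms" "length ms = i - 1" "k < length u" "s < i"
  shows "surplus s (config_of u) (terminal_mask (length u) Q) ! k
           = of_bool (psize i u k \<le> s) - of_bool (k \<in> Q)"
  using psize_cases[OF assms(1-3)] assms(3,4)
  by (auto simp: surplus_def config_of_def terminal_mask_def site_particles_def count_le_def)

lemma congested_config_of_iff:
  assumes ht: "has_type u ms" and lm: "length ms = i - 1" and x: "x < length u" and s: "s < i"
  shows "congested s (config_of u) (terminal_mask (length u) Q) x \<longleftrightarrow>
    (\<exists>k<length u. (0::int) < (\<Sum>l\<in>{k..<length u}.
        of_bool ((x + 1 + l) mod length u \<in> {k. k < length u \<and> psize i u k \<le> s})
      - of_bool ((x + 1 + l) mod length u \<in> Q)))"
proof -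
  let ?V = "surplus s (config_of u) (terminal_mask (length u) Q)"
  have "?V ! ((x + 1 + l) mod length u)
      = of_bool ((x + 1 + l) mod length u \<in> {k. k < length u \<and> psize i u k \<le> s})
        - of_bool ((x + 1 + l) mod length u \<in> Q)" for l
  proof -
    have "(x + 1 + l) mod length u < length u" using x by (intro mod_less_divisor) linarith
    then show ?thesis using surplus_config_of[OF ht lm _ s] by simp
  qed
  then show ?thesis
    unfolding congested_def has_pos_suffix_rotate_iff by simp
qed

lemma queue_run_visits_iff_congested:
  assumes ht: "has_type u ms" and lm: "length ms = i - 1" and i: "1 \<le> i"
    and Q: "Q \<subseteq> {..<length u}" and card: "sum_list ms < card Q"
    and x: "x < length u" "x \<notin> Q" and s: "s < i"
  shows "snd (queue_run (length u) Q (psize i u) (filter (\<lambda>k. psize i u k \<le> s) (entry_order i u))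
                ({}, \<lambda>_. None)) x \<noteq> None
         \<longleftrightarrow> congested s (config_of u) (terminal_mask (length u) Q) x"
proof -
  let ?n = "length u"
  define L where "L = filter (\<lambda>k. psize i u k \<le> s) (entry_order i u)"
  have setL: "set L = {k. k < ?n \<and> psize i u k \<le> s}"
    using entry_order_facts(2)[of i u] by (auto simp: L_def)
  have "set L \<subseteq> {k. k < ?n \<and> u ! k \<noteq> \<infinity>}"
    using psize_cases[OF ht lm] s by (fastforce simp: setL)
  then have "card (set L) \<le> card {k. k < ?n \<and> u ! k \<noteq> \<infinity>}" by (intro card_mono) auto
  also have "\<dots> = sum_list ms"
    using length_concat_config_of_type[OF ht lm i] by (simp add: length_concat_config_of)
  finally have cL: "card (set L) < card Q" using card by simp
  have "distinct L" "set L \<subseteq> {..<?n}"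
    using entry_order_facts(1)[of i u] setL by (auto simp: L_def)
  then obtain f where f: "queue_flow ?n Q (set L) (fst (queue_run ?n Q (psize i u) L ({}, \<lambda>_. None)))
      {z. snd (queue_run ?n Q (psize i u) L ({}, \<lambda>_. None)) z \<noteq> None} f"
    using queue_flow_run[OF _ _ cL Q, of "psize i u"] by blast
  have "snd (queue_run ?n Q (psize i u) L ({}, \<lambda>_. None)) x \<noteq> None \<longleftrightarrow> 0 < f x"
    using queue_flow_visited_iff[OF f x] by simp
  also have "\<dots> \<longleftrightarrow> congested s (config_of u) (terminal_mask ?n Q) x"
    unfolding queue_flow_pos_iff[OF f cL Q x] congested_config_of_iff[OF ht lm x(1) s] setL ..
  finally show ?thesis by (simp add: L_def)
qed

lemma first_visitor_eq_level:
  assumes ht: "has_type u ms" and lm: "length ms = i - 1" and i: "1 \<le> i"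
    and Q: "Q \<subseteq> {..<length u}" and card: "sum_list ms < card Q"
    and x: "x < length u" "x \<notin> Q"
  shows "first_visitor i Q u x = Some (level i (config_of u) (terminal_mask (length u) Q) x)"
proof -
  let ?lv = "level i (config_of u) (terminal_mask (length u) Q) x"
  have lv: "1 \<le> ?lv" "?lv \<le> i" using level_ge_1[OF i] level_le by blast+
  define visited where "visited s \<longleftrightarrow> snd (queue_run (length u) Q (psize i u)
      (filter (\<lambda>k. psize i u k \<le> s) (entry_order i u)) ({}, \<lambda>_. None)) x \<noteq> None" for s
  have size_pos: "1 \<le> psize i u k \<and> psize i u k \<le> i" if "k \<in> set (entry_order i u)" for k
    using psize_cases[OF ht lm, of k] that entry_order_facts(2)[of i u] i by auto
  have visited_iff: "1 \<le> s \<Longrightarrow> s < i \<Longrightarrow> visited s \<longleftrightarrow> congested s (config_of u) (terminal_mask (length u) Q) x"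
    for s unfolding visited_def by (rule queue_run_visits_iff_congested[OF ht lm i Q card x])
  have "\<not> visited (?lv - 1)"
  proof (cases "?lv = 1")
    case True
    then have "filter (\<lambda>k. psize i u k \<le> ?lv - 1) (entry_order i u) = []"
      by (auto simp: filter_empty_conv dest: size_pos)
    then show ?thesis by (simp add: visited_def queue_run_def)
  next
    case False
    then have "1 \<le> ?lv - 1" "?lv - 1 < ?lv" "?lv - 1 < i" using lv by linarith+
    then show ?thesis
      using visited_iff not_congested_below_level[of "?lv - 1" i "config_of u"] by simp
  qed
  moreover have "visited ?lv"
  proof (cases "?lv < i")
    case True
    then show ?thesis using visited_iff congested_level lv by blast
  next
    case False
    then have "filter (\<lambda>k. psize i u k \<le> ?lv) (entry_order i u) = entry_order i u"
      using lv by (auto simp: filter_id_conv dest: size_pos)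
    then show ?thesis
      using queue_run_visits_start[of x "entry_order i u"] entry_order_facts(2)[of i u] x
      by (simp add: visited_def)
  qed
  ultimately show ?thesis
    using queue_run_first_visitor[OF entry_order_facts(3)[of i u], of "length u" Q "?lv" "({}, \<lambda>_. None)" x]
    by (simp add: visited_def first_visitor_def queue_run_def)
qed

lemma queue_weight_eq_config_weight:
  assumes ht: "has_type u ms" and lm: "length ms = i - 1" and i: "1 \<le> i"
    and Q: "Q \<subseteq> {..<length u}" and card: "sum_list ms < card Q"
  shows "queue_weight i t Q u = config_weight i t (config_of u) (terminal_mask (length u) Q)"
proof -
  define lev where "lev x = level i (config_of u) (terminal_mask (length u) Q) x" for x
  define X where "X = {0..<length u} - Q"
  have fv: "x \<in> X \<Longrightarrow> first_visitor i Q u x = Some (lev x)" for x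
    using first_visitor_eq_level[OF ht lm i Q card, of x] by (simp add: X_def lev_def)
  have "queue_weight i t Q u = (\<Prod>s\<in>{1..i}. t s ^ card {x \<in> X. lev x = s})"
    unfolding queue_weight_def
  proof (rule prod.cong[OF refl])
    fix s
    have "{x \<in> {0..<length u} - Q. first_visitor i Q u x = Some s} = {x \<in> X. lev x = s}"
      using fv by (auto simp: X_def)
    then show "t s ^ card {x \<in> {0..<length u} - Q. first_visitor i Q u x = Some s}
             = t s ^ card {x \<in> X. lev x = s}" by simp
  qed
  also have "\<dots> = (\<Prod>s\<in>{1..i}. \<Prod>x\<in>{x \<in> X. lev x = s}. t (lev x))"
    by (rule prod.cong[OF refl]) simp
  also have "\<dots> = (\<Prod>x\<in>X. t (lev x))"
    by (rule prod.group) (use level_ge_1[OF i] level_le in \<open>auto simp: X_def lev_def\<close>)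
  also have "\<dots> = (\<Prod>y<length u. if y \<in> Q then 1 else t (lev y))"
    by (simp add: prod.If_cases X_def lessThan_atLeast0 Diff_eq)
  also have "\<dots> = config_weight i t (config_of u) (terminal_mask (length u) Q)"
    unfolding config_weight_def lev_def by (rule prod.cong) (auto simp: terminal_mask_def)
  finally show ?thesis .
qed

lemma sum_subsets_eq_sum_bool_lists:
  "(\<Sum>Q\<in>{Q. Q \<subseteq> {0..<n} \<and> card Q = c}. g (terminal_mask n Q)) = (\<Sum>qs\<in>bool_lists n c. g qs)"
proof (rule sum.reindex_bij_witness[where j = "terminal_mask n" and i = "\<lambda>qs. {z. z < n \<and> qs ! z}"])
  fix Q assume "Q \<in> {Q. Q \<subseteq> {0..<n} \<and> card Q = c}"
  then have Q: "Q \<subseteq> {0..<n}" "card Q = c" by auto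
  show "{z. z < n \<and> terminal_mask n Q ! z} = Q" using Q by (auto simp: terminal_mask_def)
  have "{z. z < n \<and> terminal_mask n Q ! z} = Q" using Q by (auto simp: terminal_mask_def)
  then show "terminal_mask n Q \<in> bool_lists n c"
    using Q by (simp add: bool_lists_def length_filter_conv_card id_def)
next
  fix qs assume "qs \<in> bool_lists n c"
  then have qs: "length qs = n" "length (filter id qs) = c" by (auto simp: bool_lists_def)
  show "terminal_mask n {z. z < n \<and> qs ! z} = qs"
    using qs by (intro nth_equalityI) (auto simp: terminal_mask_def)
  have "card {z. z < n \<and> qs ! z} = c" using qs by (simp add: length_filter_conv_card)
  then show "{z. z < n \<and> qs ! z} \<in> {Q. Q \<subseteq> {0..<n} \<and> card Q = c}" by auto
qed simp

theorem lemma7p1: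
  fixes n i mi :: nat and ms :: "nat list" and u :: "enat list"
    and t :: "nat \<Rightarrow> 'a::comm_ring_1"
  assumes "0 < n" and "1 \<le> i" and "length ms = i - 1" and "\<forall>m\<in>set ms. 0 < m"
    and "length u = n" and "has_type u ms"
    and "0 < mi" and "sum_list ms + mi \<le> n"
  shows "(\<Sum>Q\<in>{Q. Q \<subseteq> {0..<n} \<and> card Q = sum_list ms + mi}. queue_weight i t Q u)
         = hcomplete (n - (sum_list ms + mi))
             (concat (map (\<lambda>j. replicate (ms ! (j - 1)) (t j)) [1..<i]) @ replicate (mi + 1) (t i))"
proof -
  note i = assms(2) and lm = assms(3) and lu = assms(5) and ht = assms(6)
  define c where "c = sum_list ms + mi"
  have "(\<Sum>Q\<in>{Q. Q \<subseteq> {0..<n} \<and> card Q = c}. queue_weight i t Q u)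
      = (\<Sum>Q\<in>{Q. Q \<subseteq> {0..<n} \<and> card Q = c}. config_weight i t (config_of u) (terminal_mask n Q))"
  proof (rule sum.cong[OF refl])
    fix Q assume "Q \<in> {Q. Q \<subseteq> {0..<n} \<and> card Q = c}"
    then show "queue_weight i t Q u = config_weight i t (config_of u) (terminal_mask n Q)"
      using queue_weight_eq_config_weight[OF ht lm i, of Q t] assms(7) lu
      by (auto simp: c_def atLeast0LessThan)
  qed
  also have "\<dots> = config_sum i t (config_of u) c"
    unfolding sum_subsets_eq_sum_bool_lists config_sum_def using lu by simp
  also have "\<dots> = hsym (n - c) (config_vars i t (config_of u) c)"
    by (rule config_sum_eq_hsym) (use sizes_below_config_of[OF ht lm]
        length_concat_config_of_type[OF ht lm i] assms(8) lu in \<open>simp_all add: c_def\<close>)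
  finally show ?thesis
    by (simp add: c_def config_vars_config_of[OF ht lm i] hcomplete_eq_hsym)
qed

end
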